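(* Let $R$ be a complete discrete valuation ring of characteristic $p>0$ with uniformizer $\pi$, field of fractions $K$, and normalized valuation $v_K$. Let $H$ be a primitively generated $K$-Hopf algebra of rank $p^2$, $t_1,t_2$ a $K$-basis of $\mathrm{Prim}(H)$ with associated matrix $B$. Let \[\Theta=\begin{pmatrix}\pi^i&0\\ \theta&\pi^j\end{pmatrix},\qquad i,j\in\mathbb{Z},\ \theta\in K,\ v_K(\theta)\le j,\] satisfy $\Theta^{-1}B\Theta^{(p)}\in M_2(R)$. Then the Hopf order corresponding to $\Theta$ (the image in $H$ of the $R$-Hopf algebra $R[u_1,u_2]/(u_i^p-\sum_j a_{j,i}u_j)$, $u_i$ primitive, $(a_{j,i})=\Theta^{-1}B\Theta^{(p)}$, under $u_i\mapsto\sum_j\theta_{j,i}t_j$) is \[H_{i,j,\theta}=R[\pi^it_1+\theta t_2,\ \pi^jt_2]\subseteq H.\] Moreover, if $\theta'\in K$ with $v_K(\theta')\le j$ also satisfies that $\begin{pmatrix}\pi^i&0\\ \theta'&\pi^j\end{pmatrix}^{-1}B\begin{pmatrix}\pi^i&0\\ \theta'&\pi^j\end{pmatrix}^{(p)}\in M_2(R)$, then $H_{i,j,\theta}=H_{i,j,\theta'}$ if and only if $v_K(\theta-\theta')\ge j$.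
   Context: $\Theta^{(p)}$ denotes the matrix obtained by raising each entry of $\Theta=(\theta_{j,i})$ to the $p$-th power. $t$ is primitive if $\Delta(t)=t\otimes1+1\otimes t$; $\mathrm{Prim}(H)$ is the module of primitives; $H$ is primitively generated if generated as an algebra by its primitives. The associated matrix $B=(b_{j,i})$ is defined by $t_i^p=\sum_j b_{j,i}t_j$. An $R$-Hopf order in $H$ is a finitely generated projective $R$-submodule which is an $R$-Hopf algebra under the inherited operations and spans $H$ over $K$. *)

theory Defs
  imports Main "HOL-Library.Extended_Real" "HOL-Computational_Algebra.Primes"
begin

definition normalized_discrete_valuation :: "('k::field \<Rightarrow> ereal) \<Rightarrow> 'k \<Rightarrow> bool" where
  "normalized_discrete_valuation v \<pi> \<longleftrightarrow>
     (\<forall>x. v x = \<infinity> \<longleftrightarrow> x = 0) \<and>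
     (\<forall>x. x \<noteq> 0 \<longrightarrow> (\<exists>n::int. v x = ereal (of_int n))) \<and>
     (\<forall>x y. v (x * y) = v x + v y) \<and>
     (\<forall>x y. min (v x) (v y) \<le> v (x + y)) \<and>
     v \<pi> = 1"

definition valuation_complete :: "('k::field \<Rightarrow> ereal) \<Rightarrow> bool" where
  "valuation_complete v \<longleftrightarrow>
     (\<forall>X::nat \<Rightarrow> 'k.
        (\<forall>M::int. \<exists>N. \<forall>m\<ge>N. \<forall>n\<ge>N. ereal (of_int M) \<le> v (X m - X n)) \<longrightarrow>
        (\<exists>L. \<forall>M::int. \<exists>N. \<forall>n\<ge>N. ereal (of_int M) \<le> v (X n - L)))"

definition complete_dvf_char :: "nat \<Rightarrow> ('k::field \<Rightarrow> ereal) \<Rightarrow> 'k \<Rightarrow> bool" where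
  "complete_dvf_char p v \<pi> \<longleftrightarrow>
     prime p \<and> of_nat p = (0::'k) \<and> normalized_discrete_valuation v \<pi> \<and> valuation_complete v"

definition val_ring :: "('k::field \<Rightarrow> ereal) \<Rightarrow> 'k set" where
  "val_ring v = {x. 0 \<le> v x}"

type_synonym 'a mat2 = "nat \<Rightarrow> nat \<Rightarrow> 'a"

definition mmult2 :: "'a::comm_ring_1 mat2 \<Rightarrow> 'a mat2 \<Rightarrow> 'a mat2" where
  "mmult2 A C = (\<lambda>r c. \<Sum>k\<in>{1,2}. A r k * C k c)"

definition det2 :: "'a::comm_ring_1 mat2 \<Rightarrow> 'a" where
  "det2 A = A 1 1 * A 2 2 - A 1 2 * A 2 1"

definition inv2 :: "'a::field mat2 \<Rightarrow> 'a mat2" where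
  "inv2 A = (\<lambda>r c.
     (if r = 1 \<and> c = 1 then A 2 2
      else if r = 1 \<and> c = 2 then - A 1 2
      else if r = 2 \<and> c = 1 then - A 2 1
      else if r = 2 \<and> c = 2 then A 1 1 else 0) / det2 A)"

definition entry_pow2 :: "'a::comm_ring_1 mat2 \<Rightarrow> nat \<Rightarrow> 'a mat2" where
  "entry_pow2 A p = (\<lambda>r c. (A r c) ^ p)"

definition in_M2 :: "'a set \<Rightarrow> 'a mat2 \<Rightarrow> bool" where
  "in_M2 S A \<longleftrightarrow> (\<forall>r\<in>{1,2}. \<forall>c\<in>{1,2}. A r c \<in> S)"

definition theta_mat :: "'k::field \<Rightarrow> int \<Rightarrow> int \<Rightarrow> 'k \<Rightarrow> 'k mat2" where
  "theta_mat \<pi> i j \<theta> = (\<lambda>r c.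
     if r = 1 \<and> c = 1 then \<pi> powi i
     else if r = 2 \<and> c = 1 then \<theta>
     else if r = 2 \<and> c = 2 then \<pi> powi j
     else 0)"

definition twisted_mat :: "nat \<Rightarrow> 'k::field mat2 \<Rightarrow> 'k mat2 \<Rightarrow> 'k mat2" where
  "twisted_mat p B \<Theta> = mmult2 (inv2 \<Theta>) (mmult2 B (entry_pow2 \<Theta> p))"

text \<open>The (commutative) K-algebra H is a commutative ring 'h together with a ring
homomorphism kappa : K -> H (scalars). The data of a primitively generated K-Hopf algebra
of rank p^2 with K-basis t 1, t 2 of Prim(H) and associated matrix B is recorded as:
the monomials t1^a t2^b (a,b<p) form a K-basis of H, and t_i^p = sum_j b_{j,i} t_j.\<close>

definition scalar_hom :: "('k::field \<Rightarrow> 'h::comm_ring_1) \<Rightarrow> bool" where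
  "scalar_hom \<kappa> \<longleftrightarrow> \<kappa> 1 = 1 \<and> (\<forall>x y. \<kappa> (x + y) = \<kappa> x + \<kappa> y) \<and> (\<forall>x y. \<kappa> (x * y) = \<kappa> x * \<kappa> y)"

definition prim_gen_rank_p2 ::
  "nat \<Rightarrow> ('k::field \<Rightarrow> 'h::comm_ring_1) \<Rightarrow> (nat \<Rightarrow> 'h) \<Rightarrow> 'k mat2 \<Rightarrow> bool" where
  "prim_gen_rank_p2 p \<kappa> t B \<longleftrightarrow>
     scalar_hom \<kappa> \<and>
     (\<forall>h. \<exists>!c :: nat \<Rightarrow> nat \<Rightarrow> 'k.
          (\<forall>a b. (p \<le> a \<or> p \<le> b) \<longrightarrow> c a b = 0) \<and>
          h = (\<Sum>a<p. \<Sum>b<p. \<kappa> (c a b) * t 1 ^ a * t 2 ^ b)) \<and>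
     (\<forall>i\<in>{1,2}. t i ^ p = (\<Sum>j\<in>{1,2}. \<kappa> (B j i) * t j))"

inductive_set R_subalg :: "('k::field \<Rightarrow> ereal) \<Rightarrow> ('k \<Rightarrow> 'h::comm_ring_1) \<Rightarrow> 'h set \<Rightarrow> 'h set"
  for v \<kappa> S where
    scal: "r \<in> val_ring v \<Longrightarrow> \<kappa> r \<in> R_subalg v \<kappa> S"
  | gen: "x \<in> S \<Longrightarrow> x \<in> R_subalg v \<kappa> S"
  | add: "x \<in> R_subalg v \<kappa> S \<Longrightarrow> y \<in> R_subalg v \<kappa> S \<Longrightarrow> x + y \<in> R_subalg v \<kappa> S"
  | mult: "x \<in> R_subalg v \<kappa> S \<Longrightarrow> y \<in> R_subalg v \<kappa> S \<Longrightarrow> x * y \<in> R_subalg v \<kappa> S"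

definition col_image :: "('k::field \<Rightarrow> 'h::comm_ring_1) \<Rightarrow> (nat \<Rightarrow> 'h) \<Rightarrow> 'k mat2 \<Rightarrow> nat \<Rightarrow> 'h" where
  "col_image \<kappa> t \<Theta> i = (\<Sum>j\<in>{1,2}. \<kappa> (\<Theta> j i) * t j)"

text \<open>The Hopf order corresponding to Theta: the image in H of R[u1,u2]/(u_i^p - sum_j a_{j,i} u_j).\<close>
definition hopf_order_of :: "('k::field \<Rightarrow> ereal) \<Rightarrow> ('k \<Rightarrow> 'h::comm_ring_1) \<Rightarrow> (nat \<Rightarrow> 'h) \<Rightarrow> 'k mat2 \<Rightarrow> 'h set" where
  "hopf_order_of v \<kappa> t \<Theta> = R_subalg v \<kappa> {col_image \<kappa> t \<Theta> 1, col_image \<kappa> t \<Theta> 2}"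

definition H_ijt :: "('k::field \<Rightarrow> ereal) \<Rightarrow> ('k \<Rightarrow> 'h::comm_ring_1) \<Rightarrow> (nat \<Rightarrow> 'h) \<Rightarrow> 'k \<Rightarrow> int \<Rightarrow> int \<Rightarrow> 'k \<Rightarrow> 'h set" where
  "H_ijt v \<kappa> t \<pi> i j \<theta> = R_subalg v \<kappa> {\<kappa> (\<pi> powi i) * t 1 + \<kappa> \<theta> * t 2, \<kappa> (\<pi> powi j) * t 2}"

end

theory Submission
  imports Defs "HOL-Library.Product_Lexorder"
begin

(* The p-th power formula for the columns of Theta is the Frobenius identity in characteristic p
   combined with Theta (Theta^-1 B Theta^(p)) = B Theta^(p).

   For the comparison of orders put x = pi^i t1 + theta t2 and y = pi^j t2. The generators for
   theta' are x + d y and y with d = (theta' - theta) / pi^j, so the two orders coincide when d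
   is integral. Conversely, x^p and y^p are R-linear combinations of x and y, so R[x, y] is the
   R-span of the monomials x^a y^b with a, b < p. These monomials are linearly independent over K:
   ordered by total degree and then by a, their coordinates in the basis t1^a t2^b form a
   triangular matrix with nonzero diagonal entries pi^(ia) pi^(jb). Hence x + d y in R[x, y]
   forces d to be integral, and d is integral iff v (theta - theta') >= j. *)

lemma power_sum_prime_char:
  fixes f :: "'b \<Rightarrow> 'a::comm_semiring_1"
  assumes p: "prime p" and char: "of_nat p = (0::'a)"
  shows "sum f A ^ p = (\<Sum>i\<in>A. f i ^ p)"
proof (cases "(1::'a) = 0")
  case True
  have trivial: "z = 0" for z :: 'a
    by (metis True mult_1_right mult_zero_right)
  show ?thesis by (rule trans[OF trivial trivial[symmetric]])
next
  case False
  have "CHAR('a) dvd p" using char by (simp add: of_nat_eq_0_iff_char_dvd)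
  moreover have "CHAR('a) \<noteq> 1"
    using False of_nat_CHAR[where 'a='a] by (metis of_nat_1)
  ultimately have "CHAR('a) = p" using p by (auto simp: prime_nat_iff)
  with p show ?thesis by (simp add: freshmans_dream_sum)
qed

lemma monomial_reduction_induct [consumes 1, case_names small reduce_left reduce_right]:
  fixes P :: "nat \<Rightarrow> nat \<Rightarrow> bool"
  assumes "2 \<le> p"
    and small: "\<And>a b. a < p \<Longrightarrow> b < p \<Longrightarrow> P a b"
    and reduce_left: "\<And>a b. p \<le> a \<Longrightarrow> P (a - p + 1) b \<Longrightarrow> P (a - p) (b + 1) \<Longrightarrow> P a b"
    and reduce_right: "\<And>a b. p \<le> b \<Longrightarrow> P (a + 1) (b - p) \<Longrightarrow> P a (b - p + 1) \<Longrightarrow> P a b"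
  shows "P a b"
proof (induction "a + b" arbitrary: a b rule: less_induct)
  case less
  consider "p \<le> a" | "p \<le> b" | "a < p" "b < p" by linarith
  then show ?case
  proof cases
    case 1
    show ?thesis
      by (rule reduce_left[OF 1]; rule less) (use 1 \<open>2 \<le> p\<close> in auto)
  next
    case 2
    show ?thesis
      by (rule reduce_right[OF 2]; rule less) (use 2 \<open>2 \<le> p\<close> in auto)
  qed (rule small)
qed

lemma monomial_reduce_left:
  fixes x y :: "'a::comm_ring_1"
  assumes "p \<le> a" and "x ^ p = c * x + d * y"
  shows "x ^ a * y ^ b = c * (x ^ (a - p + 1) * y ^ b) + d * (x ^ (a - p) * y ^ (b + 1))"
proof -
  have "x ^ a = x ^ (a - p) * x ^ p" using \<open>p \<le> a\<close> by (simp flip: power_add)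
  then show ?thesis using assms(2) by (simp add: algebra_simps)
qed

lemma monomial_reduce_right:
  fixes x y :: "'a::comm_ring_1"
  assumes "p \<le> b" and "y ^ p = c * x + d * y"
  shows "x ^ a * y ^ b = c * (x ^ (a + 1) * y ^ (b - p)) + d * (x ^ a * y ^ (b - p + 1))"
proof -
  have "y ^ b = y ^ (b - p) * y ^ p" using \<open>p \<le> b\<close> by (simp flip: power_add)
  then show ?thesis using assms(2) by (simp add: algebra_simps)
qed

locale K_algebra =
  fixes \<kappa> :: "'k::field \<Rightarrow> 'h::comm_ring_1"
  assumes scalar_hom: "scalar_hom \<kappa>"
begin

lemma scalar_add: "\<kappa> (x + y) = \<kappa> x + \<kappa> y"
  and scalar_mult: "\<kappa> (x * y) = \<kappa> x * \<kappa> y"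
  and scalar_one: "\<kappa> 1 = 1"
  using scalar_hom unfolding scalar_hom_def by blast+

lemma scalar_zero: "\<kappa> 0 = 0"
  using scalar_add[of 0 0] by simp

lemma scalar_minus: "\<kappa> (- x) = - \<kappa> x"
  using scalar_add[of x "- x"] by (simp add: scalar_zero eq_neg_iff_add_eq_0 add.commute)

lemma scalar_diff: "\<kappa> (x - y) = \<kappa> x - \<kappa> y"
  using scalar_add[of x "- y"] by (simp add: scalar_minus)

lemma scalar_power: "\<kappa> (x ^ n) = \<kappa> x ^ n"
  by (induction n) (simp_all add: scalar_one scalar_mult)

lemma scalar_of_nat: "\<kappa> (of_nat n) = of_nat n"
  by (induction n) (simp_all add: scalar_zero scalar_one scalar_add)

lemma binomial_shear_expansion:
  "(\<kappa> \<alpha> * u + \<kappa> \<beta> * w) ^ a * (\<kappa> \<gamma> * w) ^ b =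
   (\<Sum>m\<le>a. \<kappa> (of_nat (a choose m) * \<alpha> ^ m * \<beta> ^ (a - m) * \<gamma> ^ b) * (u ^ m * w ^ (a - m + b)))"
  unfolding binomial_ring sum_distrib_right
proof (rule sum.cong[OF refl])
  fix m
  have "w ^ (a - m + b) = w ^ (a - m) * w ^ b" by (rule power_add)
  then show "of_nat (a choose m) * (\<kappa> \<alpha> * u) ^ m * (\<kappa> \<beta> * w) ^ (a - m) * (\<kappa> \<gamma> * w) ^ b =
      \<kappa> (of_nat (a choose m) * \<alpha> ^ m * \<beta> ^ (a - m) * \<gamma> ^ b) * (u ^ m * w ^ (a - m + b))"
    by (simp add: scalar_mult scalar_power scalar_of_nat power_mult_distrib algebra_simps)
qed

end

definition monomial_sum :: "nat \<Rightarrow> ('k \<Rightarrow> 'h::comm_ring_1) \<Rightarrow> 'h \<Rightarrow> 'h \<Rightarrow> (nat \<Rightarrow> nat \<Rightarrow> 'k) \<Rightarrow> 'h"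
  where "monomial_sum p \<kappa> x y c = (\<Sum>(a, b)\<in>{..<p} \<times> {..<p}. \<kappa> (c a b) * (x ^ a * y ^ b))"

context K_algebra
begin

lemma monomial_sum_add:
  "monomial_sum p \<kappa> x y (\<lambda>a b. c a b + d a b) = monomial_sum p \<kappa> x y c + monomial_sum p \<kappa> x y d"
  unfolding monomial_sum_def by (simp add: scalar_add distrib_right sum.distrib case_prod_beta)

lemma monomial_sum_diff:
  "monomial_sum p \<kappa> x y (\<lambda>a b. c a b - d a b) = monomial_sum p \<kappa> x y c - monomial_sum p \<kappa> x y d"
  unfolding monomial_sum_def by (simp add: scalar_diff left_diff_distrib sum_subtractf case_prod_beta)

lemma monomial_sum_scale:
  "monomial_sum p \<kappa> x y (\<lambda>a b. r * c a b) = \<kappa> r * monomial_sum p \<kappa> x y c"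
  unfolding monomial_sum_def by (simp add: scalar_mult sum_distrib_left mult.assoc case_prod_beta)

lemma monomial_sum_zero: "monomial_sum p \<kappa> x y (\<lambda>a b. 0) = 0"
  unfolding monomial_sum_def by (simp add: scalar_zero)

lemma monomial_sum_single:
  assumes "a < p" "b < p"
  shows "monomial_sum p \<kappa> x y (\<lambda>a' b'. if a' = a \<and> b' = b then e else 0) = \<kappa> e * (x ^ a * y ^ b)"
proof -
  have "monomial_sum p \<kappa> x y (\<lambda>a' b'. if a' = a \<and> b' = b then e else 0)
      = (\<Sum>z\<in>{..<p} \<times> {..<p}. if z = (a, b) then \<kappa> e * (x ^ a * y ^ b) else 0)"
    unfolding monomial_sum_def by (rule sum.cong[OF refl]) (auto simp: scalar_zero split: if_splits)
  also have "\<dots> = \<kappa> e * (x ^ a * y ^ b)"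
    using assms by simp
  finally show ?thesis .
qed

end

locale discrete_valuation =
  fixes v :: "'k::field \<Rightarrow> ereal" and \<pi> :: 'k
  assumes normalized: "normalized_discrete_valuation v \<pi>"
begin

lemma val_eq_infinity_iff: "v x = \<infinity> \<longleftrightarrow> x = 0"
  and val_integer: "x \<noteq> 0 \<Longrightarrow> \<exists>n::int. v x = ereal (of_int n)"
  and val_mult: "v (x * y) = v x + v y"
  and val_add: "min (v x) (v y) \<le> v (x + y)"
  and val_uniformizer: "v \<pi> = 1"
  using normalized unfolding normalized_discrete_valuation_def by blast+

lemma uniformizer_nonzero: "\<pi> \<noteq> 0"
  using val_uniformizer val_eq_infinity_iff[of \<pi>] by auto

lemma val_eq_0_if_square_eq_1:
  assumes "x * x = 1"
  shows "v x = 0"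
proof -
  obtain n :: int where n: "v x = ereal n"
    using val_integer[of x] assms by fastforce
  have "v 1 = v 1 + v 1" using val_mult[of 1 1] by simp
  moreover obtain m :: int where "v 1 = ereal m" using val_integer[of 1] by auto
  ultimately have "v 1 = 0" by (simp add: zero_ereal_def)
  with assms have "v x + v x = 0" by (simp flip: val_mult)
  with n show ?thesis by (simp add: zero_ereal_def)
qed

lemma val_one: "v 1 = 0"
  by (rule val_eq_0_if_square_eq_1) simp

lemma val_minus: "v (- x) = v x"
  using val_mult[of "-1" x] val_eq_0_if_square_eq_1[of "-1"] by simp

lemma val_inverse:
  assumes "x \<noteq> 0"
  shows "v (inverse x) = - v x"
proof -
  obtain n :: int where n: "v x = ereal n" using val_integer[OF assms] by auto
  have "v x + v (inverse x) = 0" using val_mult[of x "inverse x"] assms val_one by simp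
  with n show ?thesis by (cases "v (inverse x)") (auto simp: zero_ereal_def)
qed

lemma val_power_uniformizer: "v (\<pi> ^ n) = ereal (of_nat n)"
  by (induction n) (simp_all add: val_one val_mult val_uniformizer zero_ereal_def one_ereal_def)

lemma val_power_int_uniformizer: "v (\<pi> powi j) = ereal (of_int j)"
proof (cases "0 \<le> j")
  case True
  then show ?thesis using val_power_uniformizer[of "nat j"] by (simp add: power_int_def)
next
  case False
  then show ?thesis
    using val_power_uniformizer[of "nat (- j)"] val_inverse[of "\<pi> ^ nat (- j)"] uniformizer_nonzero
    by (simp add: power_int_def power_inverse)
qed

lemma val_ring_zero: "0 \<in> val_ring v"
  and val_ring_one: "1 \<in> val_ring v"
  using val_eq_infinity_iff[of 0] val_one unfolding val_ring_def by simp_all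

lemma val_ring_add: "x \<in> val_ring v \<Longrightarrow> y \<in> val_ring v \<Longrightarrow> x + y \<in> val_ring v"
  using val_add[of x y] unfolding val_ring_def by (auto simp: min_def split: if_splits)

lemma val_ring_mult: "x \<in> val_ring v \<Longrightarrow> y \<in> val_ring v \<Longrightarrow> x * y \<in> val_ring v"
  using val_mult[of x y] unfolding val_ring_def by simp

lemma val_ring_minus: "x \<in> val_ring v \<Longrightarrow> - x \<in> val_ring v"
  using val_minus[of x] unfolding val_ring_def by simp

lemma val_ge_power_int_iff: "ereal (of_int j) \<le> v x \<longleftrightarrow> x / \<pi> powi j \<in> val_ring v"
proof -
  have "v x = v (x / \<pi> powi j) + ereal (of_int j)"
    using val_mult[of "x / \<pi> powi j" "\<pi> powi j"] uniformizer_nonzero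
    by (simp add: val_power_int_uniformizer)
  then show ?thesis unfolding val_ring_def by (cases "v (x / \<pi> powi j)") auto
qed

end

lemma R_subalg_minimal:
  assumes "\<And>r. r \<in> val_ring v \<Longrightarrow> \<kappa> r \<in> T" and "S \<subseteq> T"
    and "\<And>x y. x \<in> T \<Longrightarrow> y \<in> T \<Longrightarrow> x + y \<in> T"
    and "\<And>x y. x \<in> T \<Longrightarrow> y \<in> T \<Longrightarrow> x * y \<in> T"
  shows "R_subalg v \<kappa> S \<subseteq> T"
proof
  fix z assume "z \<in> R_subalg v \<kappa> S"
  then show "z \<in> T" by induction (use assms in auto)
qed

lemma R_subalg_least: "S \<subseteq> R_subalg v \<kappa> T \<Longrightarrow> R_subalg v \<kappa> S \<subseteq> R_subalg v \<kappa> T"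
  by (rule R_subalg_minimal) (auto intro: R_subalg.intros)

definition int_span :: "nat \<Rightarrow> ('k::field \<Rightarrow> ereal) \<Rightarrow> ('k \<Rightarrow> 'h::comm_ring_1) \<Rightarrow> 'h \<Rightarrow> 'h \<Rightarrow> 'h set"
  where "int_span p v \<kappa> x y = {monomial_sum p \<kappa> x y c | c. \<forall>a b. c a b \<in> val_ring v}"

locale valued_K_algebra = K_algebra \<kappa> + discrete_valuation v \<pi>
  for \<kappa> :: "'k::field \<Rightarrow> 'h::comm_ring_1" and v :: "'k \<Rightarrow> ereal" and \<pi> :: 'k
begin

lemma R_subalg_shear:
  assumes "d \<in> val_ring v"
  shows "R_subalg v \<kappa> {x + \<kappa> d * y, y} = R_subalg v \<kappa> {x, y}"
proof (rule antisym; rule R_subalg_least)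
  have "x + \<kappa> d * y \<in> R_subalg v \<kappa> {x, y}"
    by (intro R_subalg.add R_subalg.mult R_subalg.scal R_subalg.gen assms) auto
  then show "{x + \<kappa> d * y, y} \<subseteq> R_subalg v \<kappa> {x, y}"
    by (auto intro: R_subalg.gen)
  have "x = (x + \<kappa> d * y) + \<kappa> (- d) * y"
    by (simp add: scalar_minus)
  also have "\<dots> \<in> R_subalg v \<kappa> {x + \<kappa> d * y, y}"
    by (intro R_subalg.add R_subalg.mult R_subalg.scal R_subalg.gen val_ring_minus assms) auto
  finally show "{x, y} \<subseteq> R_subalg v \<kappa> {x + \<kappa> d * y, y}"
    by (auto intro: R_subalg.gen)
qed

lemma int_span_add: "h \<in> int_span p v \<kappa> x y \<Longrightarrow> g \<in> int_span p v \<kappa> x y \<Longrightarrow> h + g \<in> int_span p v \<kappa> x y"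
  unfolding int_span_def by (force simp flip: monomial_sum_add intro: val_ring_add)

lemma int_span_scale: "r \<in> val_ring v \<Longrightarrow> h \<in> int_span p v \<kappa> x y \<Longrightarrow> \<kappa> r * h \<in> int_span p v \<kappa> x y"
  unfolding int_span_def by (force simp flip: monomial_sum_scale intro: val_ring_mult)

lemma int_span_zero: "0 \<in> int_span p v \<kappa> x y"
  using monomial_sum_zero[of p x y, symmetric] val_ring_zero unfolding int_span_def by auto

lemma int_span_sum:
  "(\<And>z. z \<in> A \<Longrightarrow> f z \<in> int_span p v \<kappa> x y) \<Longrightarrow> sum f A \<in> int_span p v \<kappa> x y"
  by (induction A rule: infinite_finite_induct) (simp_all add: int_span_zero int_span_add)

lemma int_span_small_monomial:
  assumes "a < p" "b < p"
  shows "x ^ a * y ^ b \<in> int_span p v \<kappa> x y"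
proof -
  have "x ^ a * y ^ b = monomial_sum p \<kappa> x y (\<lambda>a' b'. if a' = a \<and> b' = b then 1 else 0)"
    using monomial_sum_single[OF assms] by (simp add: scalar_one)
  then show ?thesis
    using val_ring_zero val_ring_one unfolding int_span_def by auto
qed

context
  fixes p :: nat and x y :: 'h and a11 a21 a12 a22 :: 'k
  assumes two_le_p: "2 \<le> p"
    and power_x: "x ^ p = \<kappa> a11 * x + \<kappa> a21 * y"
    and power_y: "y ^ p = \<kappa> a12 * x + \<kappa> a22 * y"
    and integral: "a11 \<in> val_ring v" "a21 \<in> val_ring v" "a12 \<in> val_ring v" "a22 \<in> val_ring v"
begin

lemma int_span_monomial: "x ^ m * y ^ n \<in> int_span p v \<kappa> x y"
  using two_le_p
proof (induction m n rule: monomial_reduction_induct)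
  case (small m n)
  then show ?case by (rule int_span_small_monomial)
next
  case (reduce_left m n)
  then show ?case
    unfolding monomial_reduce_left[OF reduce_left(1) power_x]
    using integral by (intro int_span_add int_span_scale)
next
  case (reduce_right m n)
  then show ?case
    unfolding monomial_reduce_right[OF reduce_right(1) power_y]
    using integral by (intro int_span_add int_span_scale)
qed

lemma int_span_mult:
  assumes h: "h \<in> int_span p v \<kappa> x y" and g: "g \<in> int_span p v \<kappa> x y"
  shows "h * g \<in> int_span p v \<kappa> x y"
proof -
  have monomial_mult: "x ^ m * y ^ n * f \<in> int_span p v \<kappa> x y" if f: "f \<in> int_span p v \<kappa> x y" for m n f
  proof -
    obtain e where e: "\<forall>a b. e a b \<in> val_ring v" and f: "f = monomial_sum p \<kappa> x y e"
      using f unfolding int_span_def by blast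
    have "x ^ m * y ^ n * f = (\<Sum>(a, b)\<in>{..<p} \<times> {..<p}. \<kappa> (e a b) * (x ^ (m + a) * y ^ (n + b)))"
      unfolding f monomial_sum_def sum_distrib_left
      by (rule sum.cong[OF refl]) (simp add: case_prod_beta power_add mult_ac)
    also have "\<dots> \<in> int_span p v \<kappa> x y"
      using e by (auto intro!: int_span_sum int_span_scale int_span_monomial)
    finally show ?thesis .
  qed
  obtain e where e: "\<forall>a b. e a b \<in> val_ring v" and g: "g = monomial_sum p \<kappa> x y e"
    using g unfolding int_span_def by blast
  have "h * g = (\<Sum>(a, b)\<in>{..<p} \<times> {..<p}. \<kappa> (e a b) * (x ^ a * y ^ b * h))"
    unfolding g monomial_sum_def sum_distrib_left
    by (rule sum.cong[OF refl]) (simp add: case_prod_beta mult_ac)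
  also have "\<dots> \<in> int_span p v \<kappa> x y"
    using e h by (auto intro!: int_span_sum int_span_scale monomial_mult)
  finally show ?thesis .
qed

lemma R_subalg_subset_int_span: "R_subalg v \<kappa> {x, y} \<subseteq> int_span p v \<kappa> x y"
proof (rule R_subalg_minimal)
  show "\<kappa> r \<in> int_span p v \<kappa> x y" if "r \<in> val_ring v" for r
    using int_span_scale[OF that int_span_monomial[of 0 0]] by simp
  show "{x, y} \<subseteq> int_span p v \<kappa> x y"
    using int_span_monomial[of 1 0] int_span_monomial[of 0 1] by simp
qed (simp_all add: int_span_add int_span_mult)

end

end

context K_algebra
begin

lemma col_image_theta_mat:
  "col_image \<kappa> t (theta_mat \<pi> i j \<theta>) 1 = \<kappa> (\<pi> powi i) * t 1 + \<kappa> \<theta> * t 2"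
  "col_image \<kappa> t (theta_mat \<pi> i j \<theta>) 2 = \<kappa> (\<pi> powi j) * t 2"
  by (simp_all add: col_image_def theta_mat_def scalar_zero)

lemma H_ijt_shear:
  assumes "\<pi> \<noteq> 0"
  shows "H_ijt v \<kappa> t \<pi> i j \<theta>' = R_subalg v \<kappa>
    {\<kappa> (\<pi> powi i) * t 1 + \<kappa> \<theta> * t 2 + \<kappa> ((\<theta>' - \<theta>) / \<pi> powi j) * (\<kappa> (\<pi> powi j) * t 2), \<kappa> (\<pi> powi j) * t 2}"
proof -
  have "\<kappa> ((\<theta>' - \<theta>) / \<pi> powi j) * (\<kappa> (\<pi> powi j) * t 2) = \<kappa> (\<theta>' - \<theta>) * t 2"
    using assms by (simp add: mult.assoc[symmetric] flip: scalar_mult)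
  then have "\<kappa> (\<pi> powi i) * t 1 + \<kappa> \<theta> * t 2 + \<kappa> ((\<theta>' - \<theta>) / \<pi> powi j) * (\<kappa> (\<pi> powi j) * t 2) =
      \<kappa> (\<pi> powi i) * t 1 + \<kappa> \<theta>' * t 2"
    by (simp add: scalar_diff algebra_simps)
  then show ?thesis
    unfolding H_ijt_def by (simp only:)
qed

end

lemma det2_theta_mat: "\<pi> \<noteq> 0 \<Longrightarrow> det2 (theta_mat \<pi> i j \<theta>) \<noteq> 0"
  by (simp add: det2_def theta_mat_def)

lemma mmult2_inv2_cancel_left:
  fixes \<Theta> :: "'a::field mat2"
  assumes "det2 \<Theta> \<noteq> 0" and "r \<in> {1, 2}"
  shows "mmult2 \<Theta> (mmult2 (inv2 \<Theta>) C) r c = C r c"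
proof -
  have "mmult2 \<Theta> (mmult2 (inv2 \<Theta>) C) r c =
      (\<Theta> r 1 * (\<Theta> 2 2 * C 1 c - \<Theta> 1 2 * C 2 c) + \<Theta> r 2 * (\<Theta> 1 1 * C 2 c - \<Theta> 2 1 * C 1 c)) / det2 \<Theta>"
    using assms(1) by (simp add: mmult2_def inv2_def field_simps)
  also have "\<dots> = C r c"
    using assms by (auto simp: divide_eq_eq det2_def algebra_simps)
  finally show ?thesis .
qed

locale rank_p2_algebra =
  fixes p :: nat and \<kappa> :: "'k::field \<Rightarrow> 'h::comm_ring_1" and t :: "nat \<Rightarrow> 'h" and B :: "'k mat2"
  assumes prim_gen: "prim_gen_rank_p2 p \<kappa> t B" and two_le_p: "2 \<le> p"
begin

sublocale K_algebra \<kappa>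
  using prim_gen by unfold_locales (simp add: prim_gen_rank_p2_def)

lemma t_power: "i \<in> {1, 2} \<Longrightarrow> t i ^ p = (\<Sum>j\<in>{1, 2}. \<kappa> (B j i) * t j)"
  using prim_gen unfolding prim_gen_rank_p2_def by blast

lemma t1_power: "t 1 ^ p = \<kappa> (B 1 1) * t 1 + \<kappa> (B 2 1) * t 2"
  and t2_power: "t 2 ^ p = \<kappa> (B 1 2) * t 1 + \<kappa> (B 2 2) * t 2"
  using t_power[of 1] t_power[of 2] by simp_all

lemma unique_coordinates:
  "\<exists>!c. (\<forall>a b. p \<le> a \<or> p \<le> b \<longrightarrow> c a b = 0) \<and> h = monomial_sum p \<kappa> (t 1) (t 2) c"
proof -
  have "(\<Sum>a<p. \<Sum>b<p. \<kappa> (c a b) * t 1 ^ a * t 2 ^ b) = monomial_sum p \<kappa> (t 1) (t 2) c" for c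
    by (simp add: monomial_sum_def sum.cartesian_product mult.assoc)
  then show ?thesis using prim_gen unfolding prim_gen_rank_p2_def by presburger
qed

definition coord :: "'h \<Rightarrow> nat \<Rightarrow> nat \<Rightarrow> 'k" where
  "coord h = (THE c. (\<forall>a b. p \<le> a \<or> p \<le> b \<longrightarrow> c a b = 0) \<and> h = monomial_sum p \<kappa> (t 1) (t 2) c)"

lemma coord_eqI:
  assumes "\<forall>a b. p \<le> a \<or> p \<le> b \<longrightarrow> c a b = 0" and "h = monomial_sum p \<kappa> (t 1) (t 2) c"
  shows "coord h = c"
  unfolding coord_def using assms unique_coordinates by (intro the1_equality) blast+

lemma coord_spec:
  "(\<forall>a b. p \<le> a \<or> p \<le> b \<longrightarrow> coord h a b = 0) \<and> h = monomial_sum p \<kappa> (t 1) (t 2) (coord h)"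
  unfolding coord_def by (rule theI'[OF unique_coordinates])

lemma coord_add: "coord (h + g) a b = coord h a b + coord g a b"
proof -
  have "coord (h + g) = (\<lambda>a b. coord h a b + coord g a b)"
    using coord_spec[of h] coord_spec[of g] by (intro coord_eqI) (auto simp: monomial_sum_add)
  then show ?thesis by simp
qed

lemma coord_scale: "coord (\<kappa> r * h) a b = r * coord h a b"
proof -
  have "coord (\<kappa> r * h) = (\<lambda>a b. r * coord h a b)"
    using coord_spec[of h] by (intro coord_eqI) (auto simp: monomial_sum_scale)
  then show ?thesis by simp
qed

lemma coord_zero: "coord 0 a b = 0"
  using coord_eqI[of "\<lambda>a b. 0" 0] by (simp add: monomial_sum_zero)

lemma coord_sum: "coord (sum f A) a b = (\<Sum>z\<in>A. coord (f z) a b)"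
  by (induction A rule: infinite_finite_induct) (simp_all add: coord_zero coord_add)

lemma coord_small_monomial:
  assumes "k < p" "l < p"
  shows "coord (t 1 ^ k * t 2 ^ l) a b = (if a = k \<and> b = l then 1 else 0)"
proof -
  have "coord (t 1 ^ k * t 2 ^ l) = (\<lambda>a b. if a = k \<and> b = l then 1 else 0)"
    using assms monomial_sum_single[OF assms, of "t 1" "t 2" 1] by (intro coord_eqI) (auto simp: scalar_one)
  then show ?thesis by simp
qed

lemma coord_lin_comb_nonzero:
  "coord (\<kappa> c * h + \<kappa> d * g) a b \<noteq> 0 \<Longrightarrow> coord h a b \<noteq> 0 \<or> coord g a b \<noteq> 0"
  by (auto simp: coord_add coord_scale)

lemma coord_monomial_support:
  assumes "coord (t 1 ^ k * t 2 ^ l) a b \<noteq> 0"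
  shows "(a = k \<and> b = l) \<or> a + b < k + l"
proof -
  have "\<forall>a b. coord (t 1 ^ k * t 2 ^ l) a b \<noteq> 0 \<longrightarrow> (a = k \<and> b = l) \<or> a + b < k + l"
    using two_le_p
  proof (induction k l rule: monomial_reduction_induct)
    case (small k l)
    then show ?case using coord_small_monomial[OF small] by simp
  next
    case (reduce_left k l)
    show ?case
    proof (intro allI impI)
      fix a b
      assume "coord (t 1 ^ k * t 2 ^ l) a b \<noteq> 0"
      then have "coord (t 1 ^ (k - p + 1) * t 2 ^ l) a b \<noteq> 0 \<or> coord (t 1 ^ (k - p) * t 2 ^ (l + 1)) a b \<noteq> 0"
        unfolding monomial_reduce_left[OF reduce_left(1) t1_power] by (rule coord_lin_comb_nonzero)
      then show "(a = k \<and> b = l) \<or> a + b < k + l"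
        using reduce_left(2,3)[rule_format, of a b] reduce_left(1) two_le_p by auto
    qed
  next
    case (reduce_right k l)
    show ?case
    proof (intro allI impI)
      fix a b
      assume "coord (t 1 ^ k * t 2 ^ l) a b \<noteq> 0"
      then have "coord (t 1 ^ (k + 1) * t 2 ^ (l - p)) a b \<noteq> 0 \<or> coord (t 1 ^ k * t 2 ^ (l - p + 1)) a b \<noteq> 0"
        unfolding monomial_reduce_right[OF reduce_right(1) t2_power] by (rule coord_lin_comb_nonzero)
      then show "(a = k \<and> b = l) \<or> a + b < k + l"
        using reduce_right(2,3)[rule_format, of a b] reduce_right(1) two_le_p by auto
    qed
  qed
  with assms show ?thesis by blast
qed

lemma coord_shear_monomial:
  assumes x: "x = \<kappa> \<alpha> * t 1 + \<kappa> \<beta> * t 2" and y: "y = \<kappa> \<gamma> * t 2"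
    and "a < p" "b < p" and "(a + b, a) \<le> (a' + b', a')"
  shows "coord (x ^ a * y ^ b) a' b' = (if a' = a \<and> b' = b then \<alpha> ^ a * \<gamma> ^ b else 0)"
proof -
  have summand: "coord (t 1 ^ m * t 2 ^ (a - m + b)) a' b' =
      (if m = a then if a' = a \<and> b' = b then 1 else 0 else 0)" if "m \<le> a" for m
  proof (cases "m = a \<and> a' = a \<and> b' = b")
    case True
    then show ?thesis using coord_small_monomial[OF assms(3,4), of a b] by simp
  next
    case False
    have "coord (t 1 ^ m * t 2 ^ (a - m + b)) a' b' = 0"
    proof (rule ccontr)
      assume "coord (t 1 ^ m * t 2 ^ (a - m + b)) a' b' \<noteq> 0"
      from coord_monomial_support[OF this] that assms(5) False show False by auto
    qed
    with False show ?thesis by auto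
  qed
  have "coord (x ^ a * y ^ b) a' b' =
      (\<Sum>m\<le>a. of_nat (a choose m) * \<alpha> ^ m * \<beta> ^ (a - m) * \<gamma> ^ b * coord (t 1 ^ m * t 2 ^ (a - m + b)) a' b')"
    unfolding x y binomial_shear_expansion by (simp add: coord_sum coord_scale)
  also have "\<dots> = (\<Sum>m\<le>a. if m = a then if a' = a \<and> b' = b then \<alpha> ^ a * \<gamma> ^ b else 0 else 0)"
    by (rule sum.cong[OF refl]) (use summand in simp)
  also have "\<dots> = (if a' = a \<and> b' = b then \<alpha> ^ a * \<gamma> ^ b else 0)"
    by simp
  finally show ?thesis .
qed

lemma monomial_sum_shear_eq_0:
  assumes x: "x = \<kappa> \<alpha> * t 1 + \<kappa> \<beta> * t 2" and y: "y = \<kappa> \<gamma> * t 2"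
    and "\<alpha> \<noteq> 0" "\<gamma> \<noteq> 0" and zero: "monomial_sum p \<kappa> x y c = 0"
    and "a < p" "b < p"
  shows "c a b = 0"
proof (rule ccontr)
  define S where "S = {(a, b) \<in> {..<p} \<times> {..<p}. c a b \<noteq> 0}"
  define key where "key = (\<lambda>(a::nat, b::nat). (a + b, a))"
  assume "c a b \<noteq> 0"
  with assms have "S \<noteq> {}" unfolding S_def by auto
  moreover have "finite S" unfolding S_def by (rule finite_subset[of _ "{..<p} \<times> {..<p}"]) auto
  ultimately have "Max (key ` S) \<in> key ` S" by simp
  then obtain z0 where z0: "Max (key ` S) = key z0" and "z0 \<in> S" by (rule imageE)
  obtain a0 b0 where "z0 = (a0, b0)" by fastforce
  with \<open>z0 \<in> S\<close> z0 have S0: "(a0, b0) \<in> S" and "key (a0, b0) = Max (key ` S)"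
    by simp_all
  then have max: "key z \<le> key (a0, b0)" if "z \<in> S" for z
    using \<open>finite S\<close> that by simp
  \<comment> \<open>(a0, b0) has the largest key in the support, so by triangularity only the diagonal
     term survives in the (a0, b0)-coordinate of the sum.\<close>
  have summand: "(case z of (a, b) \<Rightarrow> c a b * coord (x ^ a * y ^ b) a0 b0) =
      (if z = (a0, b0) then c a0 b0 * (\<alpha> ^ a0 * \<gamma> ^ b0) else 0)"
    if "z \<in> {..<p} \<times> {..<p}" for z
  proof (cases "z \<in> S")
    case True
    then obtain a b where "z = (a, b)" "a < p" "b < p" "(a + b, a) \<le> (a0 + b0, a0)"
      using max[OF True] unfolding S_def key_def by auto
    then show ?thesis by (simp add: coord_shear_monomial[OF x y])
  next
    case False
    with that S0 show ?thesis unfolding S_def by auto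
  qed
  have "0 = coord (monomial_sum p \<kappa> x y c) a0 b0"
    by (simp add: zero coord_zero)
  also have "\<dots> = (\<Sum>(a, b)\<in>{..<p} \<times> {..<p}.
      c a b * coord (x ^ a * y ^ b) a0 b0)"
    by (simp add: monomial_sum_def coord_sum coord_scale case_prod_beta)
  also have "\<dots> = (\<Sum>z\<in>{..<p} \<times> {..<p}. if z = (a0, b0) then c a0 b0 * (\<alpha> ^ a0 * \<gamma> ^ b0) else 0)"
    by (rule sum.cong[OF refl]) (rule summand)
  also have "\<dots> = c a0 b0 * (\<alpha> ^ a0 * \<gamma> ^ b0)"
    using S0 unfolding S_def by simp
  finally show False
    using S0 assms unfolding S_def by simp
qed

lemma power_col_image:
  assumes "prime p" and char: "of_nat p = (0::'k)" and "det2 \<Theta> \<noteq> 0" and "r \<in> {1, 2}"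
  shows "col_image \<kappa> t \<Theta> r ^ p = (\<Sum>s\<in>{1, 2}. \<kappa> (twisted_mat p B \<Theta> s r) * col_image \<kappa> t \<Theta> s)"
proof -
  have char_h: "of_nat p = (0::'h)"
    using scalar_of_nat[of p] by (simp add: char scalar_zero)
  have "col_image \<kappa> t \<Theta> r ^ p = (\<Sum>j\<in>{1, 2}. \<kappa> (\<Theta> j r ^ p) * t j ^ p)"
    unfolding col_image_def power_sum_prime_char[OF \<open>prime p\<close> char_h]
    by (simp add: power_mult_distrib scalar_power)
  also have "\<dots> = (\<Sum>k\<in>{1, 2}. \<kappa> (mmult2 B (entry_pow2 \<Theta> p) k r) * t k)"
    by (simp add: t_power mmult2_def entry_pow2_def scalar_add scalar_mult algebra_simps)
  also have "\<dots> = (\<Sum>k\<in>{1, 2}. \<kappa> (mmult2 \<Theta> (twisted_mat p B \<Theta>) k r) * t k)"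
    using mmult2_inv2_cancel_left[OF \<open>det2 \<Theta> \<noteq> 0\<close>] by (simp add: twisted_mat_def)
  also have "\<dots> = (\<Sum>s\<in>{1, 2}. \<kappa> (twisted_mat p B \<Theta> s r) * col_image \<kappa> t \<Theta> s)"
    by (simp add: mmult2_def col_image_def scalar_add scalar_mult algebra_simps)
  finally show ?thesis .
qed

lemma R_subalg_shear_eq_iff:
  assumes val: "normalized_discrete_valuation v \<pi>"
    and x: "x = \<kappa> \<alpha> * t 1 + \<kappa> \<beta> * t 2" and y: "y = \<kappa> \<gamma> * t 2" and "\<alpha> \<noteq> 0" "\<gamma> \<noteq> 0"
    and power_x: "x ^ p = \<kappa> a11 * x + \<kappa> a21 * y" and power_y: "y ^ p = \<kappa> a12 * x + \<kappa> a22 * y"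
    and integral: "a11 \<in> val_ring v" "a21 \<in> val_ring v" "a12 \<in> val_ring v" "a22 \<in> val_ring v"
  shows "R_subalg v \<kappa> {x + \<kappa> d * y, y} = R_subalg v \<kappa> {x, y} \<longleftrightarrow> d \<in> val_ring v"
proof -
  interpret valued_K_algebra \<kappa> v \<pi>
    using val by unfold_locales
  show ?thesis
  proof
    assume "R_subalg v \<kappa> {x + \<kappa> d * y, y} = R_subalg v \<kappa> {x, y}"
    then have "x + \<kappa> d * y \<in> R_subalg v \<kappa> {x, y}"
      by (auto intro: R_subalg.gen)
    then obtain c where c: "\<forall>a b. c a b \<in> val_ring v" and "x + \<kappa> d * y = monomial_sum p \<kappa> x y c"
      using R_subalg_subset_int_span[OF two_le_p power_x power_y integral] unfolding int_span_def by blast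
    moreover have "x + \<kappa> d * y = monomial_sum p \<kappa> x y
        (\<lambda>a b. (if a = 1 \<and> b = 0 then 1 else 0) + (if a = 0 \<and> b = 1 then d else 0))"
      using two_le_p by (simp add: monomial_sum_add monomial_sum_single scalar_one)
    ultimately have "monomial_sum p \<kappa> x y
        (\<lambda>a b. c a b - ((if a = 1 \<and> b = 0 then 1 else 0) + (if a = 0 \<and> b = 1 then d else 0))) = 0"
      by (simp add: monomial_sum_diff)
    from monomial_sum_shear_eq_0[OF x y \<open>\<alpha> \<noteq> 0\<close> \<open>\<gamma> \<noteq> 0\<close> this, of 0 1] have "d = c 0 1"
      using two_le_p by simp
    with c show "d \<in> val_ring v" by simp
  qed (rule R_subalg_shear)
qed

lemma H_ijt_eq_iff:
  assumes "prime p" and char: "of_nat p = (0::'k)" and val: "normalized_discrete_valuation v \<pi>"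
    and integral: "in_M2 (val_ring v) (twisted_mat p B (theta_mat \<pi> i j \<theta>))"
  shows "H_ijt v \<kappa> t \<pi> i j \<theta> = H_ijt v \<kappa> t \<pi> i j \<theta>' \<longleftrightarrow> ereal (of_int j) \<le> v (\<theta> - \<theta>')"
proof -
  interpret discrete_valuation v \<pi>
    using val by unfold_locales
  define A where "A = twisted_mat p B (theta_mat \<pi> i j \<theta>)"
  define x y where "x = \<kappa> (\<pi> powi i) * t 1 + \<kappa> \<theta> * t 2" and "y = \<kappa> (\<pi> powi j) * t 2"
  have nonzero: "\<pi> powi i \<noteq> 0" "\<pi> powi j \<noteq> 0"
    using uniformizer_nonzero by simp_all
  note powers = power_col_image[OF \<open>prime p\<close> char det2_theta_mat[OF uniformizer_nonzero, of i j \<theta>]]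
  have power_x: "x ^ p = \<kappa> (A 1 1) * x + \<kappa> (A 2 1) * y"
    and power_y: "y ^ p = \<kappa> (A 1 2) * x + \<kappa> (A 2 2) * y"
    using powers[of 1] powers[of 2] unfolding A_def x_def y_def
    by (simp_all add: col_image_theta_mat del: One_nat_def)
  have A_integral: "A 1 1 \<in> val_ring v" "A 2 1 \<in> val_ring v" "A 1 2 \<in> val_ring v" "A 2 2 \<in> val_ring v"
    using integral unfolding in_M2_def A_def by simp_all
  have "H_ijt v \<kappa> t \<pi> i j \<theta> = R_subalg v \<kappa> {x, y}"
    unfolding H_ijt_def x_def y_def ..
  then have "H_ijt v \<kappa> t \<pi> i j \<theta> = H_ijt v \<kappa> t \<pi> i j \<theta>' \<longleftrightarrow> (\<theta>' - \<theta>) / \<pi> powi j \<in> val_ring v"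
    unfolding H_ijt_shear[OF uniformizer_nonzero, of v t i j \<theta>' \<theta>] x_def[symmetric] y_def[symmetric]
    using R_subalg_shear_eq_iff[OF val x_def y_def nonzero power_x power_y A_integral] by metis
  also have "\<dots> \<longleftrightarrow> ereal (of_int j) \<le> v (\<theta> - \<theta>')"
    using val_minus[of "\<theta>' - \<theta>"] by (simp add: val_ge_power_int_iff)
  finally show ?thesis .
qed

end

theorem corollary6p5:
  fixes p :: nat and v :: "'k::field \<Rightarrow> ereal" and \<pi> :: 'k
    and \<kappa> :: "'k \<Rightarrow> 'h::comm_ring_1" and t :: "nat \<Rightarrow> 'h" and B :: "'k mat2"
    and i j :: int and \<theta> :: 'k
  assumes K: "complete_dvf_char p v \<pi>"
    and H: "prim_gen_rank_p2 p \<kappa> t B"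
    and vth: "v \<theta> \<le> ereal (of_int j)"
    and integral: "in_M2 (val_ring v) (twisted_mat p B (theta_mat \<pi> i j \<theta>))"
  shows "(\<forall>r\<in>{1,2}. col_image \<kappa> t (theta_mat \<pi> i j \<theta>) r ^ p =
            (\<Sum>s\<in>{1,2}. \<kappa> (twisted_mat p B (theta_mat \<pi> i j \<theta>) s r)
                          * col_image \<kappa> t (theta_mat \<pi> i j \<theta>) s))
         \<and> hopf_order_of v \<kappa> t (theta_mat \<pi> i j \<theta>) = H_ijt v \<kappa> t \<pi> i j \<theta>
         \<and> (\<forall>\<theta>'. v \<theta>' \<le> ereal (of_int j) \<longrightarrow>
              in_M2 (val_ring v) (twisted_mat p B (theta_mat \<pi> i j \<theta>')) \<longrightarrow>
              (H_ijt v \<kappa> t \<pi> i j \<theta> = H_ijt v \<kappa> t \<pi> i j \<theta>' \<longleftrightarrow>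
               ereal (of_int j) \<le> v (\<theta> - \<theta>')))"
proof -
  from K have "prime p" and char: "of_nat p = (0::'k)" and val: "normalized_discrete_valuation v \<pi>"
    unfolding complete_dvf_char_def by auto
  interpret rank_p2_algebra p \<kappa> t B
    using H prime_ge_2_nat[OF \<open>prime p\<close>] by unfold_locales
  have "det2 (theta_mat \<pi> i j \<theta>) \<noteq> 0"
    using discrete_valuation.uniformizer_nonzero[OF discrete_valuation.intro[OF val]]
    by (rule det2_theta_mat)
  moreover have "hopf_order_of v \<kappa> t (theta_mat \<pi> i j \<theta>) = H_ijt v \<kappa> t \<pi> i j \<theta>"
    unfolding hopf_order_of_def H_ijt_def col_image_theta_mat ..
  ultimately show ?thesis
    using power_col_image[OF \<open>prime p\<close> char] H_ijt_eq_iff[OF \<open>prime p\<close> char val integral]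
    by blast
qed

end
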